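(* Let $\kappa>0$ be an ordinal. For each $\alpha<\kappa$, let $L_\alpha$ be a set equipped with two partial orders $\le$ and $\preceq$, each of which makes $L_\alpha$ a complete lattice. Let $L=\prod_{\alpha<\kappa}L_\alpha$ with the pointwise order $x\le y$ iff $x(\alpha)\le y(\alpha)$ for all $\alpha<\kappa$. For $\alpha<\kappa$ define $x\sqsubseteq_\alpha y$ iff $x(\beta)=y(\beta)$ for all $\beta<\alpha$ and $x(\alpha)\preceq y(\alpha)$. Then $(L,\le,(\sqsubseteq_\alpha)_{\alpha<\kappa})$ satisfies Axiom 3 if and only if for every $\alpha<\kappa$ and all $a,b\in L_\alpha$, $a\preceq b$ implies $a\le b$. (In that case the structure is a model of Axioms 1–4, since Axioms 1, 2 and 4 always hold for this construction.)
   Context: Conventions. $x=_\alpha y$ means $x\sqsubseteq_\alpha y$ and $y\sqsubseteq_\alpha x$. For $x\in L$, $(x]_\alpha=\{y\in L:\forall\beta<\alpha,\ x=_\beta y\}$. For a set $X$, $X\sqsubseteq_\alpha y$ means $x\sqsubseteq_\alpha y$ for all $x\in X$. Axiom 3: for every $x\in L$, every $\alpha<\kappa$ and every $X\subseteq(x]_\alpha$ there is $y\in(x]_\alpha$ with $X\sqsubseteq_\alpha y$ such that for all $z\in(x]_\alpha$ with $X\sqsubseteq_\alpha z$ we have $y\sqsubseteq_\alpha z$ and $y\le z$. The other axioms: - (A1) for all $\alpha<\beta<\kappa$, $x\sqsubseteq_\beta y$ implies $x=_\alpha y$; - (A2) $\bigcap_{\alpha<\kappa}=_\alpha$ is the identity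 relation on $L$; - (A4) for every nonempty $X\subseteq L$, every $\alpha<\kappa$ and every $y\in L$, if $y=_\alpha x$ for all $x\in X$ then $y=_\alpha\bigvee X$, where $\bigvee$ is the join for $\le$. *)

theory Defs
  imports Main
begin

definition partial_order_on_set :: "'a set \<Rightarrow> ('a \<Rightarrow> 'a \<Rightarrow> bool) \<Rightarrow> bool" where
  "partial_order_on_set A r \<longleftrightarrow>
     (\<forall>a\<in>A. r a a) \<and>
     (\<forall>a\<in>A. \<forall>b\<in>A. r a b \<and> r b a \<longrightarrow> a = b) \<and>
     (\<forall>a\<in>A. \<forall>b\<in>A. \<forall>c\<in>A. r a b \<and> r b c \<longrightarrow> r a c)"

definition complete_lattice_on_set :: "'a set \<Rightarrow> ('a \<Rightarrow> 'a \<Rightarrow> bool) \<Rightarrow> bool" where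
  "complete_lattice_on_set A r \<longleftrightarrow> partial_order_on_set A r \<and>
     (\<forall>X\<subseteq>A. \<exists>s\<in>A. (\<forall>x\<in>X. r x s) \<and> (\<forall>t\<in>A. (\<forall>x\<in>X. r x t) \<longrightarrow> r s t))"

text \<open>Generic structure (L, le, (sq alpha)_{alpha < kappa}); the ordinal kappa is the order type
  of the well-ordered index type 'i (every index alpha :: 'i is < kappa).\<close>
definition eq_at :: "('i \<Rightarrow> 'x \<Rightarrow> 'x \<Rightarrow> bool) \<Rightarrow> 'i \<Rightarrow> 'x \<Rightarrow> 'x \<Rightarrow> bool" where
  "eq_at sq \<alpha> x y \<longleftrightarrow> sq \<alpha> x y \<and> sq \<alpha> y x"

definition down_at :: "'x set \<Rightarrow> ('i::order \<Rightarrow> 'x \<Rightarrow> 'x \<Rightarrow> bool) \<Rightarrow> 'x \<Rightarrow> 'i \<Rightarrow> 'x set" where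
  "down_at L sq x \<alpha> = {y \<in> L. \<forall>\<beta><\<alpha>. eq_at sq \<beta> x y}"

definition axiom3 :: "'x set \<Rightarrow> ('x \<Rightarrow> 'x \<Rightarrow> bool) \<Rightarrow> ('i::order \<Rightarrow> 'x \<Rightarrow> 'x \<Rightarrow> bool) \<Rightarrow> bool" where
  "axiom3 L le sq \<longleftrightarrow>
     (\<forall>x\<in>L. \<forall>\<alpha>. \<forall>X. X \<subseteq> down_at L sq x \<alpha> \<longrightarrow>
        (\<exists>y\<in>down_at L sq x \<alpha>. (\<forall>u\<in>X. sq \<alpha> u y) \<and>
           (\<forall>z\<in>down_at L sq x \<alpha>. (\<forall>u\<in>X. sq \<alpha> u z) \<longrightarrow> sq \<alpha> y z \<and> le y z)))"

definition prodL :: "('i \<Rightarrow> 'a set) \<Rightarrow> ('i \<Rightarrow> 'a) set" where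
  "prodL A = {x. \<forall>\<alpha>. x \<alpha> \<in> A \<alpha>}"

definition prod_le :: "('i \<Rightarrow> 'a \<Rightarrow> 'a \<Rightarrow> bool) \<Rightarrow> ('i \<Rightarrow> 'a) \<Rightarrow> ('i \<Rightarrow> 'a) \<Rightarrow> bool" where
  "prod_le le x y \<longleftrightarrow> (\<forall>\<alpha>. le \<alpha> (x \<alpha>) (y \<alpha>))"

definition prod_sq :: "('i::order \<Rightarrow> 'a \<Rightarrow> 'a \<Rightarrow> bool) \<Rightarrow> 'i \<Rightarrow> ('i \<Rightarrow> 'a) \<Rightarrow> ('i \<Rightarrow> 'a) \<Rightarrow> bool" where
  "prod_sq pre \<alpha> x y \<longleftrightarrow> (\<forall>\<beta><\<alpha>. x \<beta> = y \<beta>) \<and> pre \<alpha> (x \<alpha>) (y \<alpha>)"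

end

theory Submission
  imports Defs
begin

text \<open>Necessity: for x with x \<alpha> = a, Axiom 3 applied to X = {x} inside (x]_\<alpha> gives y with
  y \<alpha> = a that is \<le>-below every z \<in> (x]_\<alpha> with x \<sqsubseteq>_\<alpha> z, in particular below x(\<alpha> := b)
  whenever a \<preceq> b. Sufficiency: the required y agrees with x below \<alpha>, is the \<preceq>-supremum of the
  \<alpha>-th coordinates of X at \<alpha>, and is \<le>-least at every other index; it lies \<le>-below each
  admissible z at \<alpha> exactly because \<preceq> implies \<le> there.\<close>

lemma complete_lattice_on_set_supE:
  assumes "complete_lattice_on_set A r" and "X \<subseteq> A"
  obtains s where "s \<in> A" "\<And>x. x \<in> X \<Longrightarrow> r x s" "\<And>t. t \<in> A \<Longrightarrow> \<forall>x\<in>X. r x t \<Longrightarrow> r s t"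
  using assms unfolding complete_lattice_on_set_def by meson

lemma complete_lattice_on_set_has_least:
  assumes "complete_lattice_on_set A r"
  shows "\<exists>s\<in>A. \<forall>t\<in>A. r s t"
  using complete_lattice_on_set_supE[OF assms empty_subsetI] by (metis empty_iff)

lemma down_at_prod_sq_iff:
  fixes A :: "'i::order \<Rightarrow> 'a set"
  assumes po: "\<And>\<alpha>. partial_order_on_set (A \<alpha>) (pre \<alpha>)"
    and x: "x \<in> prodL A"
  shows "y \<in> down_at (prodL A) (prod_sq pre) x \<alpha> \<longleftrightarrow> y \<in> prodL A \<and> (\<forall>\<beta><\<alpha>. y \<beta> = x \<beta>)"
proof
  assume y: "y \<in> down_at (prodL A) (prod_sq pre) x \<alpha>"
  have "y \<beta> = x \<beta>" if "\<beta> < \<alpha>" for \<beta>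
  proof -
    have "pre \<beta> (x \<beta>) (y \<beta>)" "pre \<beta> (y \<beta>) (x \<beta>)"
      using y that by (auto simp: down_at_def eq_at_def prod_sq_def)
    moreover have "x \<beta> \<in> A \<beta>" "y \<beta> \<in> A \<beta>"
      using x y by (auto simp: prodL_def down_at_def)
    ultimately show ?thesis using po[of \<beta>] unfolding partial_order_on_set_def by blast
  qed
  then show "y \<in> prodL A \<and> (\<forall>\<beta><\<alpha>. y \<beta> = x \<beta>)" using y by (simp add: down_at_def)
next
  assume y: "y \<in> prodL A \<and> (\<forall>\<beta><\<alpha>. y \<beta> = x \<beta>)"
  have "eq_at (prod_sq pre) \<beta> x y" if "\<beta> < \<alpha>" for \<beta>
  proof -
    have "pre \<beta> (x \<beta>) (x \<beta>)"
      using x po[of \<beta>] unfolding prodL_def partial_order_on_set_def by blast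
    then show ?thesis using y that unfolding eq_at_def prod_sq_def
      by (metis order.strict_trans)
  qed
  then show "y \<in> down_at (prodL A) (prod_sq pre) x \<alpha>" using y by (simp add: down_at_def)
qed

lemma pre_imp_le_if_axiom3_prod:
  fixes A :: "'i::order \<Rightarrow> 'a set"
  assumes po: "\<And>\<alpha>. partial_order_on_set (A \<alpha>) (pre \<alpha>)"
    and nonempty: "\<And>\<alpha>. A \<alpha> \<noteq> {}"
    and ax: "axiom3 (prodL A) (prod_le le) (prod_sq pre)"
    and a: "a \<in> A \<alpha>" and b: "b \<in> A \<alpha>" and ab: "pre \<alpha> a b"
  shows "le \<alpha> a b"
proof -
  define x where "x = (\<lambda>\<gamma>. SOME c. c \<in> A \<gamma>)(\<alpha> := a)"
  have xL: "x \<in> prodL A"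
    using a nonempty by (simp add: prodL_def x_def some_in_eq)
  note down = down_at_prod_sq_iff[OF po xL]
  have x_down: "x \<in> down_at (prodL A) (prod_sq pre) x \<alpha>"
    using down xL by blast
  obtain y where y_down: "y \<in> down_at (prodL A) (prod_sq pre) x \<alpha>"
    and xy: "prod_sq pre \<alpha> x y"
    and y_least: "\<And>z. z \<in> down_at (prodL A) (prod_sq pre) x \<alpha> \<Longrightarrow> prod_sq pre \<alpha> x z \<Longrightarrow>
                    prod_sq pre \<alpha> y z \<and> prod_le le y z"
    using ax xL x_down unfolding axiom3_def by (metis empty_subsetI insert_subset singleton_iff)
  have "pre \<alpha> a a" using po[of \<alpha>] a unfolding partial_order_on_set_def by blast
  then have "prod_sq pre \<alpha> x x" by (simp add: prod_sq_def x_def)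
  then have "pre \<alpha> (y \<alpha>) a" using y_least[OF x_down] by (simp add: prod_sq_def x_def)
  moreover have "pre \<alpha> a (y \<alpha>)" using xy by (simp add: prod_sq_def x_def)
  moreover have "y \<alpha> \<in> A \<alpha>" using y_down by (simp add: down_at_def prodL_def)
  ultimately have ya: "y \<alpha> = a" using po[of \<alpha>] a unfolding partial_order_on_set_def by blast
  define z where "z = x(\<alpha> := b)"
  have "z \<in> down_at (prodL A) (prod_sq pre) x \<alpha>"
    using down xL b by (simp add: prodL_def z_def)
  moreover have "prod_sq pre \<alpha> x z" using ab by (simp add: prod_sq_def x_def z_def)
  ultimately have "prod_le le y z" using y_least by blast
  then show "le \<alpha> a b" using ya unfolding prod_le_def z_def by (metis fun_upd_same)
qed

lemma axiom3_prod_if_pre_imp_le: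
  fixes A :: "'i::order \<Rightarrow> 'a set"
  assumes pre: "\<And>\<alpha>. complete_lattice_on_set (A \<alpha>) (pre \<alpha>)"
    and le_refl: "\<And>\<alpha> a. a \<in> A \<alpha> \<Longrightarrow> le \<alpha> a a"
    and le_least: "\<And>\<alpha>. \<exists>s\<in>A \<alpha>. \<forall>t\<in>A \<alpha>. le \<alpha> s t"
    and pre_imp_le: "\<forall>\<alpha>. \<forall>a\<in>A \<alpha>. \<forall>b\<in>A \<alpha>. pre \<alpha> a b \<longrightarrow> le \<alpha> a b"
  shows "axiom3 (prodL A) (prod_le le) (prod_sq pre)"
  unfolding axiom3_def
proof (intro ballI allI impI)
  fix x \<alpha> X
  assume xL: "x \<in> prodL A" and X: "X \<subseteq> down_at (prodL A) (prod_sq pre) x \<alpha>"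
  have po: "\<And>\<alpha>. partial_order_on_set (A \<alpha>) (pre \<alpha>)"
    using pre by (simp add: complete_lattice_on_set_def)
  note down = down_at_prod_sq_iff[OF po xL]
  define bot where "bot = (\<lambda>\<gamma>. SOME s. s \<in> A \<gamma> \<and> (\<forall>t\<in>A \<gamma>. le \<gamma> s t))"
  have bot: "bot \<gamma> \<in> A \<gamma>" "\<And>t. t \<in> A \<gamma> \<Longrightarrow> le \<gamma> (bot \<gamma>) t" for \<gamma>
    using someI_ex[OF le_least[of \<gamma>, unfolded Bex_def]] unfolding bot_def by blast+
  have "(\<lambda>u. u \<alpha>) ` X \<subseteq> A \<alpha>" using X down by (auto simp: prodL_def)
  then obtain s where s: "s \<in> A \<alpha>" "\<And>v. v \<in> (\<lambda>u. u \<alpha>) ` X \<Longrightarrow> pre \<alpha> v s"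
    and s_least: "\<And>t. t \<in> A \<alpha> \<Longrightarrow> \<forall>v\<in>(\<lambda>u. u \<alpha>) ` X. pre \<alpha> v t \<Longrightarrow> pre \<alpha> s t"
    by (erule complete_lattice_on_set_supE[OF pre])
  define y where "y = (\<lambda>\<gamma>. if \<gamma> < \<alpha> then x \<gamma> else if \<gamma> = \<alpha> then s else bot \<gamma>)"
  have "y \<in> prodL A" using xL s bot by (auto simp: prodL_def y_def)
  then have y_down: "y \<in> down_at (prodL A) (prod_sq pre) x \<alpha>" using down by (simp add: y_def)
  show "\<exists>y\<in>down_at (prodL A) (prod_sq pre) x \<alpha>. (\<forall>u\<in>X. prod_sq pre \<alpha> u y) \<and>
         (\<forall>z\<in>down_at (prodL A) (prod_sq pre) x \<alpha>. (\<forall>u\<in>X. prod_sq pre \<alpha> u z) \<longrightarrow>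
            prod_sq pre \<alpha> y z \<and> prod_le le y z)"
  proof (intro bexI[OF _ y_down] conjI ballI impI)
    fix u assume "u \<in> X"
    then show "prod_sq pre \<alpha> u y" using X down s(2) by (auto simp: prod_sq_def y_def)
  next
    fix z assume "z \<in> down_at (prodL A) (prod_sq pre) x \<alpha>" and Xz: "\<forall>u\<in>X. prod_sq pre \<alpha> u z"
    then have zL: "z \<in> prodL A" and zx: "\<forall>\<beta><\<alpha>. z \<beta> = x \<beta>" using down by auto
    have sz: "pre \<alpha> s (z \<alpha>)"
      using s_least zL Xz by (simp add: prodL_def prod_sq_def)
    then show "prod_sq pre \<alpha> y z" using zx by (simp add: prod_sq_def y_def)
    show "prod_le le y z" unfolding prod_le_def
    proof
      fix \<gamma>
      have "z \<gamma> \<in> A \<gamma>" using zL by (simp add: prodL_def)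
      consider "\<gamma> < \<alpha>" | "\<gamma> = \<alpha>" | "\<not> \<gamma> < \<alpha>" "\<gamma> \<noteq> \<alpha>" by blast
      then show "le \<gamma> (y \<gamma>) (z \<gamma>)"
      proof cases
        case 1
        then show ?thesis using zx \<open>z \<gamma> \<in> A \<gamma>\<close> le_refl by (simp add: y_def)
      next
        case 2
        then show ?thesis using pre_imp_le s(1) sz zL by (simp add: y_def prodL_def)
      next
        case 3
        then show ?thesis using bot(2) \<open>z \<gamma> \<in> A \<gamma>\<close> by (simp add: y_def)
      qed
    qed
  qed
qed

theorem mainTheorem14:
  fixes A :: "'i::wellorder \<Rightarrow> 'a set"
    and le pre :: "'i \<Rightarrow> 'a \<Rightarrow> 'a \<Rightarrow> bool"
  assumes "\<And>\<alpha>. complete_lattice_on_set (A \<alpha>) (le \<alpha>)"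
    and "\<And>\<alpha>. complete_lattice_on_set (A \<alpha>) (pre \<alpha>)"
  shows "axiom3 (prodL A) (prod_le le) (prod_sq pre) \<longleftrightarrow>
         (\<forall>\<alpha>. \<forall>a\<in>A \<alpha>. \<forall>b\<in>A \<alpha>. pre \<alpha> a b \<longrightarrow> le \<alpha> a b)"
proof -
  have pre_order: "\<And>\<alpha>. partial_order_on_set (A \<alpha>) (pre \<alpha>)"
    using assms(2) by (simp add: complete_lattice_on_set_def)
  have le_refl: "\<And>\<alpha> a. a \<in> A \<alpha> \<Longrightarrow> le \<alpha> a a"
    using assms(1) by (simp add: complete_lattice_on_set_def partial_order_on_set_def)
  have le_least: "\<And>\<alpha>. \<exists>s\<in>A \<alpha>. \<forall>t\<in>A \<alpha>. le \<alpha> s t"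
    using assms(1) by (rule complete_lattice_on_set_has_least)
  then have nonempty: "\<And>\<alpha>. A \<alpha> \<noteq> {}" by (metis empty_iff)
  show ?thesis
  proof
    assume "axiom3 (prodL A) (prod_le le) (prod_sq pre)"
    then show "\<forall>\<alpha>. \<forall>a\<in>A \<alpha>. \<forall>b\<in>A \<alpha>. pre \<alpha> a b \<longrightarrow> le \<alpha> a b"
      using pre_imp_le_if_axiom3_prod[of A pre le, OF pre_order nonempty] by blast
  next
    assume compatible: "\<forall>\<alpha>. \<forall>a\<in>A \<alpha>. \<forall>b\<in>A \<alpha>. pre \<alpha> a b \<longrightarrow> le \<alpha> a b"
    show "axiom3 (prodL A) (prod_le le) (prod_sq pre)"
      using assms(2) le_refl le_least compatible by (rule axiom3_prod_if_pre_imp_le)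
  qed
qed

end
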